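(* Let $X$ be a non-negative random variable with distribution function $F$ and finite mean $\mu=\mathbb{E}(X)>0$, and let $m\geqslant 2$ be an integer. Then \[ IG_{m;\min}=\frac{1}{m}\,G_m(F),\qquad IG_{m;\max}=\left(1-\frac{1}{m}\right)D_{m-1}(F), \] where, with $U\sim U(0,1)$ uniform and $L(p)=\frac{1}{\mu}\int_0^p F^{-1}(t)\,{\rm d}t$ ($0\leqslant p\leqslant 1$) the Lorenz curve of $X$, \[ D_n(F)=(n+1)\,\mathbb{E}\big[\{U-L(U)\}U^{n-1}\big],\qquad G_n(F)=n(n-1)\,\mathbb{E}\big[\{U-L(U)\}(1-U)^{n-2}\big],\qquad n\geqslant 1. \]
   Context: For an integer $m\geqslant 2$ and i.i.d. copies $X_1,\ldots,X_m$ of $X$, the extended lower Gini index is $IG_{m;\min}=\dfrac{\mathbb{E}[X_1-\min\{X_1,\ldots,X_m\}]}{m\mu}$ and the extended upper Gini index is $IG_{m;\max}=\dfrac{\mathbb{E}[\max\{X_1,\ldots,X_m\}-X_1]}{m\mu}$. $F^{-1}$ denotes the quantile function (generalized inverse) of $F$. *)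

theory Defs
  imports "HOL-Probability.Probability"
begin

definition cdf_of :: "'a measure \<Rightarrow> ('a \<Rightarrow> real) \<Rightarrow> real \<Rightarrow> real" where
  "cdf_of M X x = measure M {\<omega> \<in> space M. X \<omega> \<le> x}"

definition quantile_fn :: "(real \<Rightarrow> real) \<Rightarrow> real \<Rightarrow> real" where
  "quantile_fn F t = Inf {x. t \<le> F x}"

definition mean_of :: "'a measure \<Rightarrow> ('a \<Rightarrow> real) \<Rightarrow> real" where
  "mean_of M X = (\<integral>\<omega>. X \<omega> \<partial>M)"

definition lorenz :: "'a measure \<Rightarrow> ('a \<Rightarrow> real) \<Rightarrow> real \<Rightarrow> real" where
  "lorenz M X p = (1 / mean_of M X) *
     (\<integral>t\<in>{0..p}. quantile_fn (cdf_of M X) t \<partial>lborel)"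

definition iid_copies :: "'a measure \<Rightarrow> ('a \<Rightarrow> real) \<Rightarrow> nat \<Rightarrow> (nat \<Rightarrow> real) measure" where
  "iid_copies M X m = PiM {..<m} (\<lambda>_. distr M borel X)"

definition IG_min :: "'a measure \<Rightarrow> ('a \<Rightarrow> real) \<Rightarrow> nat \<Rightarrow> real" where
  "IG_min M X m = (\<integral>x. x 0 - Min (x ` {..<m}) \<partial>iid_copies M X m) / (real m * mean_of M X)"

definition IG_max :: "'a measure \<Rightarrow> ('a \<Rightarrow> real) \<Rightarrow> nat \<Rightarrow> real" where
  "IG_max M X m = (\<integral>x. Max (x ` {..<m}) - x 0 \<partial>iid_copies M X m) / (real m * mean_of M X)"

abbreviation unif01 :: "real measure" where
  "unif01 \<equiv> uniform_measure lborel {0..1::real}"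

definition D_index :: "'a measure \<Rightarrow> ('a \<Rightarrow> real) \<Rightarrow> nat \<Rightarrow> real" where
  "D_index M X n = real (n + 1) * (\<integral>u. (u - lorenz M X u) * u ^ (n - 1) \<partial>unif01)"

definition G_index :: "'a measure \<Rightarrow> ('a \<Rightarrow> real) \<Rightarrow> nat \<Rightarrow> real" where
  "G_index M X n = real n * (real n - 1) * (\<integral>u. (u - lorenz M X u) * (1 - u) ^ (n - 2) \<partial>unif01)"

end

(*
  Put GL(p) = int_0^oo (p - F t)^+ dt. Since F^{-1}(s) is the Lebesgue measure of
  {t >= 0. F t < s}, Tonelli gives int_0^p F^{-1} = GL(p), i.e. mu L(p) = GL(p), and the
  layer-cake formula gives mu = GL(1), E[min] = int_0^oo (1 - F)^m and E[max] = int_0^oo (1 - F^m).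
  A second application of Tonelli turns int_0^1 GL(u) w(u) du into int_0^oo h(F t) dt, where
  h(a) = int_a^1 (u - a) w(u) du. For w(u) = (1 - u)^(m-2) this h is (1 - a)^m / (m (m - 1)),
  and for w(u) = u^(m-2) it is ((1 - a) - (1 - a^m) / m) / (m - 1); integrated against F they
  produce E[min] and mu - E[max] / m, which is all that G_m and D_(m-1) depend on.
*)
theory Submission
  imports Defs
begin

lemma nn_integral_layer_cake:
  fixes g :: "'b \<Rightarrow> real"
  assumes "sigma_finite_measure K" and [measurable]: "g \<in> borel_measurable K"
  shows "(\<integral>\<^sup>+x. ennreal (g x) \<partial>K) =
         (\<integral>\<^sup>+t. indicator {0..} t * emeasure K {x\<in>space K. t < g x} \<partial>lborel)"
proof -
  interpret pair_sigma_finite K lborel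
    using assms(1) by (simp add: pair_sigma_finite_def lborel.sigma_finite_measure_axioms)
  have "ennreal (g x) = (\<integral>\<^sup>+t. indicator {0..<g x} t \<partial>lborel)" for x
    by (cases "0 \<le> g x") (auto simp: ennreal_neg)
  then have "(\<integral>\<^sup>+x. ennreal (g x) \<partial>K) = (\<integral>\<^sup>+x. (\<integral>\<^sup>+t. indicator {0..<g x} t \<partial>lborel) \<partial>K)"
    by simp
  also have "\<dots> = (\<integral>\<^sup>+t. (\<integral>\<^sup>+x. indicator {0..<g x} t \<partial>K) \<partial>lborel)"
  proof (rule Fubini'[symmetric])
    have "case_prod (\<lambda>x t. indicator {0..<g x} t :: ennreal) =
          (\<lambda>p. of_bool (0 \<le> snd p \<and> snd p < g (fst p)))"
      by (auto simp: fun_eq_iff indicator_def)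
    then show "case_prod (\<lambda>x t. indicator {0..<g x} t :: ennreal) \<in> borel_measurable (K \<Otimes>\<^sub>M lborel)"
      by simp
  qed
  also have "\<dots> = (\<integral>\<^sup>+t. indicator {0..} t * emeasure K {x\<in>space K. t < g x} \<partial>lborel)"
  proof (rule nn_integral_cong)
    fix t :: real
    have "(\<integral>\<^sup>+x. indicator {0..<g x} t \<partial>K) =
          (\<integral>\<^sup>+x. indicator {0..} t * indicator {x\<in>space K. t < g x} x \<partial>K)"
      by (rule nn_integral_cong) (auto simp: indicator_def)
    also have "\<dots> = indicator {0..} t * emeasure K {x\<in>space K. t < g x}"
      by (rule nn_integral_cmult_indicator) measurable
    finally show "(\<integral>\<^sup>+x. indicator {0..<g x} t \<partial>K) = indicator {0..} t * emeasure K {x\<in>space K. t < g x}" .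
  qed
  finally show ?thesis .
qed

lemma integral_layer_cake:
  fixes g :: "'b \<Rightarrow> real"
  assumes "finite_measure K" and [measurable]: "g \<in> borel_measurable K"
    and "AE x in K. 0 \<le> g x"
    and tail: "set_integrable lborel {0..} (\<lambda>t. measure K {x\<in>space K. t < g x})"
  shows "integrable K g \<and> integral\<^sup>L K g = (\<integral>t\<in>{0..}. measure K {x\<in>space K. t < g x} \<partial>lborel)"
proof -
  interpret finite_measure K by fact
  have "(\<integral>\<^sup>+x. ennreal (g x) \<partial>K) =
        (\<integral>\<^sup>+t. ennreal (indicator {0..} t * measure K {x\<in>space K. t < g x}) \<partial>lborel)"
    by (simp add: nn_integral_layer_cake sigma_finite_measure emeasure_eq_measure indicator_mult_ennreal)
  also have "\<dots> = ennreal (\<integral>t\<in>{0..}. measure K {x\<in>space K. t < g x} \<partial>lborel)"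
    using tail unfolding set_integrable_def set_lebesgue_integral_def
    by (simp add: nn_integral_eq_integral)
  finally show ?thesis
    using assms(3) unfolding set_lebesgue_integral_def
    by (subst (asm) nn_integral_eq_integrable) (auto intro: integral_nonneg_AE)
qed

lemma integral_uniform_01:
  fixes f :: "real \<Rightarrow> real"
  assumes [measurable]: "f \<in> borel_measurable borel"
  shows "(\<integral>u. f u \<partial>unif01) = (\<integral>u. indicator {0..1} u * f u \<partial>lborel)"
proof -
  have "unif01 = density lborel (\<lambda>u. ennreal (indicator {0..1::real} u))"
    unfolding uniform_measure_def by (simp add: ennreal_indicator divide_ennreal_def)
  then show ?thesis
    by (simp add: integral_density)
qed

lemma integral_Icc_shift_mult_complement_power:
  fixes a :: real
  assumes "a \<le> 1"
  shows "(\<integral>u\<in>{a..1}. (u - a) * (1 - u) ^ k \<partial>lborel) = (1 - a) ^ (k + 2) / (real (k + 1) * real (k + 2))"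
proof -
  define G where "G u = (1 - u) ^ (k + 2) / (k + 2) - (1 - a) * (1 - u) ^ (k + 1) / (k + 1)" for u :: real
  have G': "(G has_real_derivative (u - a) * (1 - u) ^ k) (at u)" for u
    unfolding G_def by (rule derivative_eq_intros refl | simp)+ (simp add: field_simps)
  have "(LBINT u=a..(1::real). (u - a) * (1 - u) ^ k) = G 1 - G a"
    using assms by (intro interval_integral_FTC_finite continuous_intros)
      (auto simp: has_real_derivative_iff_has_vector_derivative[symmetric] intro: DERIV_subset[OF G'])
  also have "\<dots> = (1 - a) ^ (k + 2) / (real (k + 1) * real (k + 2))"
    by (simp add: G_def field_split_simps)
  finally show ?thesis
    using assms by (simp add: interval_integral_Icc)
qed

lemma integral_Icc_shift_mult_power:
  fixes a :: real
  assumes "a \<le> 1"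
  shows "(\<integral>u\<in>{a..1}. (u - a) * u ^ k \<partial>lborel) = ((1 - a) - (1 - a ^ (k + 2)) / (k + 2)) / (k + 1)"
proof -
  define G where "G u = u ^ (k + 2) / (k + 2) - a * u ^ (k + 1) / (k + 1)" for u :: real
  have G': "(G has_real_derivative (u - a) * u ^ k) (at u)" for u
    unfolding G_def by (rule derivative_eq_intros refl | simp)+ (simp add: field_simps)
  have "(LBINT u=a..(1::real). (u - a) * u ^ k) = G 1 - G a"
    using assms by (intro interval_integral_FTC_finite continuous_intros)
      (auto simp: has_real_derivative_iff_has_vector_derivative[symmetric] intro: DERIV_subset[OF G'])
  also have "\<dots> = ((1 - a) - (1 - a ^ (k + 2)) / (k + 2)) / (k + 1)"
    by (simp add: G_def field_simps)
      (simp add: add_divide_distrib[symmetric] diff_divide_distrib[symmetric] algebra_simps)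
  finally show ?thesis
    using assms by (simp add: interval_integral_Icc)
qed

lemma nn_integral_Icc_shift_mult:
  fixes w :: "real \<Rightarrow> real"
  assumes "continuous_on {0..1} w" and w_nonneg: "\<And>u. u \<in> {0..1} \<Longrightarrow> 0 \<le> w u"
    and a: "0 \<le> a" "a \<le> 1"
  shows "(\<integral>\<^sup>+u. indicator {0..1} u * ennreal (u - a) * ennreal (w u) \<partial>lborel) =
         ennreal (\<integral>u\<in>{a..1}. (u - a) * w u \<partial>lborel)"
proof -
  have "(\<integral>\<^sup>+u. indicator {0..1} u * ennreal (u - a) * ennreal (w u) \<partial>lborel) =
        (\<integral>\<^sup>+u. ennreal (indicator {a..1} u * ((u - a) * w u)) \<partial>lborel)"
  proof (rule nn_integral_cong)
    fix u :: real
    show "indicator {0..1} u * ennreal (u - a) * ennreal (w u) = ennreal (indicator {a..1} u * ((u - a) * w u))"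
      using a w_nonneg[of u] by (cases "a \<le> u"; cases "u \<le> 1") (auto simp: indicator_def ennreal_neg ennreal_mult)
  qed
  also have "\<dots> = ennreal (\<integral>u\<in>{a..1}. (u - a) * w u \<partial>lborel)"
    unfolding set_lebesgue_integral_def real_scaleR_def
  proof (rule nn_integral_eq_integral)
    have "continuous_on {a..1} (\<lambda>u. (u - a) * w u)"
      using a by (intro continuous_intros continuous_on_subset[OF assms(1)]) auto
    from borel_integrable_compact[OF compact_Icc this]
    show "integrable lborel (\<lambda>u. indicator {a..1} u * ((u - a) * w u))"
      by simp
    show "AE u in lborel. 0 \<le> indicator {a..1} u * ((u - a) * w u)"
      using a w_nonneg by (auto simp: indicator_def)
  qed
  finally show ?thesis .
qed

context real_distribution
begin

lemma quantile_fn_le_iff: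
  assumes "0 < s" "s < 1"
  shows "quantile_fn (cdf M) s \<le> x \<longleftrightarrow> s \<le> cdf M x"
proof -
  let ?S = "{x. s \<le> cdf M x}"
  obtain x1 where "s < cdf M x1"
    using order_tendstoD(1)[OF cdf_lim_at_top_prob \<open>s < 1\<close>] by (auto simp: eventually_at_top_linorder)
  then have ne: "?S \<noteq> {}" by (auto intro!: exI[of _ x1])
  obtain x0 where x0: "\<And>y. y \<le> x0 \<Longrightarrow> cdf M y < s"
    using order_tendstoD(2)[OF cdf_lim_at_bot \<open>0 < s\<close>] by (auto simp: eventually_at_bot_linorder)
  have bdd: "bdd_below ?S"
  proof (rule bdd_belowI)
    fix y
    assume "y \<in> ?S"
    with x0[of y] show "x0 \<le> y" by (cases "y \<le> x0") auto
  qed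
  have attained: "s \<le> cdf M (quantile_fn (cdf M) s)"
  proof (rule tendsto_lowerbound)
    show "(cdf M \<longlongrightarrow> cdf M (quantile_fn (cdf M) s)) (at_right (quantile_fn (cdf M) s))"
      using cdf_is_right_cont by (simp add: continuous_within)
    show "\<forall>\<^sub>F x in at_right (quantile_fn (cdf M) s). s \<le> cdf M x"
      using eventually_at_right_less
    proof eventually_elim
      case (elim x)
      then obtain y where "y \<in> ?S" "y < x"
        using cInf_less_iff[OF ne bdd, of x] by (auto simp: quantile_fn_def)
      then show ?case using cdf_nondecreasing[of y x] by auto
    qed
  qed simp
  show ?thesis
  proof
    assume "quantile_fn (cdf M) s \<le> x"
    then show "s \<le> cdf M x" using attained cdf_nondecreasing by (blast intro: order_trans)
  next
    assume "s \<le> cdf M x"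
    then show "quantile_fn (cdf M) s \<le> x" unfolding quantile_fn_def by (intro cInf_lower bdd) auto
  qed
qed

lemma mono_on_quantile_fn: "mono_on {0<..<1} (quantile_fn (cdf M))"
proof (rule mono_onI)
  fix r s :: real
  assume "r \<in> {0<..<1}" "s \<in> {0<..<1}" "r \<le> s"
  then show "quantile_fn (cdf M) r \<le> quantile_fn (cdf M) s"
    using quantile_fn_le_iff[of s "quantile_fn (cdf M) s"] quantile_fn_le_iff[of r "quantile_fn (cdf M) s"]
    by simp
qed

lemma borel_measurable_quantile_fn: "quantile_fn (cdf M) \<in> borel_measurable borel"
proof (rule measurable_discrete_difference[where X="{0, 1}"])
  let ?Q = "quantile_fn (cdf M)"
  have "(\<lambda>s. indicator {0<..<1} s * ?Q s) \<in> borel_measurable borel"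
    using borel_measurable_mono_on_fnc[OF mono_on_quantile_fn]
      borel_measurable_restrict_space_iff[of "{0<..<1}" borel ?Q] by simp
  then show "(\<lambda>s. indicator {0<..<1} s * ?Q s + indicator {1<..} s * ?Q 2 + indicator {..<0} s * ?Q (-1))
      \<in> borel_measurable borel"
    by measurable
  fix s :: real
  assume "s \<notin> {0, 1}"
  moreover have "?Q s = ?Q 2" if "1 < s"
  proof -
    have "cdf M x < s" "cdf M x < 2" for x
      using cdf_bounded_prob[of x] that by linarith+
    then have "{x. s \<le> cdf M x} = {}" "{x. 2 \<le> cdf M x} = {}"
      by (auto simp: not_le)
    then show ?thesis unfolding quantile_fn_def by simp
  qed
  moreover have "?Q s = ?Q (-1)" if "s < 0"
  proof -
    have "s \<le> cdf M x" "-1 \<le> cdf M x" for x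
      using cdf_nonneg[of x] that by linarith+
    then have "{x. s \<le> cdf M x} = UNIV" "{x. -1 \<le> cdf M x} = UNIV"
      by auto
    then show ?thesis unfolding quantile_fn_def by simp
  qed
  ultimately show "indicator {0<..<1} s * ?Q s + indicator {1<..} s * ?Q 2 + indicator {..<0} s * ?Q (-1) = ?Q s"
    by (cases "s < 0"; cases "1 < s") (auto simp: indicator_def)
qed auto

end

locale nonneg_integrable_rv = prob_space M for M :: "'a measure" +
  fixes X :: "'a \<Rightarrow> real"
  assumes X_measurable[measurable]: "X \<in> borel_measurable M"
    and X_nonneg: "AE \<omega> in M. 0 \<le> X \<omega>"
    and X_integrable: "integrable M X"
begin

abbreviation law :: "real measure" where
  "law \<equiv> distr M borel X"

abbreviation F :: "real \<Rightarrow> real" where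
  "F \<equiv> cdf_of M X"

abbreviation Q :: "real \<Rightarrow> real" where
  "Q \<equiv> quantile_fn F"

lemma real_distribution_law: "real_distribution law"
  by simp

lemma cdf_of_eq_cdf: "F = cdf law"
  by (simp add: fun_eq_iff cdf_of_def cdf_def measure_distr vimage_def Int_def conj_commute)

lemma cdf_of_nonneg: "0 \<le> F x"
  by (simp add: cdf_of_def)

lemma cdf_of_le_1: "F x \<le> 1"
  unfolding cdf_of_eq_cdf by (rule real_distribution.cdf_bounded_prob[OF real_distribution_law])

lemma cdf_of_mono: "x \<le> y \<Longrightarrow> F x \<le> F y"
  unfolding cdf_of_eq_cdf
  by (rule finite_borel_measure.cdf_nondecreasing[OF real_distribution.finite_borel_measure_M[OF real_distribution_law]])

lemma cdf_of_eq_0: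
  assumes "x < 0"
  shows "F x = 0"
proof -
  have "AE \<omega> in M. \<omega> \<notin> {\<omega> \<in> space M. X \<omega> \<le> x}"
    using X_nonneg by eventually_elim (use assms in auto)
  then show ?thesis
    unfolding cdf_of_def by (subst (asm) AE_iff_measurable[OF _ refl]) (auto simp: measure_def)
qed

lemma borel_measurable_cdf_of[measurable]: "F \<in> borel_measurable borel"
  by (rule borel_measurable_mono) (simp add: mono_def cdf_of_mono)

lemma emeasure_law_greaterThan: "emeasure law {t<..} = ennreal (1 - F t)"
proof -
  have "{\<omega>\<in>space M. t < X \<omega>} = space M - {\<omega>\<in>space M. X \<omega> \<le> t}"
    by auto
  then have "emeasure M {\<omega>\<in>space M. t < X \<omega>} = ennreal (1 - F t)"
    unfolding cdf_of_def by (simp add: emeasure_eq_measure prob_compl)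
  then show ?thesis
    by (simp add: emeasure_distr vimage_def Int_def conj_commute)
qed

lemma emeasure_law_atMost: "emeasure law {..t} = ennreal (F t)"
  by (simp add: cdf_of_def emeasure_distr vimage_def Int_def conj_commute emeasure_eq_measure)

lemma emeasure_law_UNIV: "emeasure law UNIV = 1"
  using prob_space.emeasure_space_1[OF prob_space_distr[OF X_measurable]] by simp

lemma quantile_le_iff: "0 < s \<Longrightarrow> s < 1 \<Longrightarrow> Q s \<le> x \<longleftrightarrow> s \<le> F x"
  unfolding cdf_of_eq_cdf by (rule real_distribution.quantile_fn_le_iff[OF real_distribution_law])

lemma borel_measurable_quantile[measurable]: "Q \<in> borel_measurable borel"
  unfolding cdf_of_eq_cdf by (rule real_distribution.borel_measurable_quantile_fn[OF real_distribution_law])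

lemma quantile_nonneg:
  assumes "0 < s" "s < 1"
  shows "0 \<le> Q s"
proof (rule ccontr)
  assume "\<not> 0 \<le> Q s"
  then have "F (Q s) = 0"
    by (intro cdf_of_eq_0) simp
  moreover have "s \<le> F (Q s)"
    using quantile_le_iff[OF assms, of "Q s"] by simp
  ultimately show False
    using assms by simp
qed

lemma emeasure_below_quantile:
  assumes "0 < s" "s < 1"
  shows "emeasure lborel {t. 0 \<le> t \<and> F t < s} = ennreal (Q s)"
proof -
  have "{t. 0 \<le> t \<and> F t < s} = {0..<Q s}"
  proof (rule set_eqI)
    fix t
    have "\<not> F t < s \<longleftrightarrow> \<not> t < Q s"
      by (simp only: not_less quantile_le_iff[OF assms])
    then show "t \<in> {t. 0 \<le> t \<and> F t < s} \<longleftrightarrow> t \<in> {0..<Q s}"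
      by auto
  qed
  then show ?thesis
    using quantile_nonneg[OF assms] by simp
qed

text \<open>The generalised Lorenz curve \<open>\<mu> L(p) = \<integral>\<^sub>0\<^sup>p F\<^sup>-\<^sup>1\<close> in the form
  \<open>\<integral>\<^sub>0\<^sup>\<infinity> (p - F t)\<^sup>+ dt\<close>; the positive part is the truncation of \<^typ>\<open>ennreal\<close>.\<close>
definition gen_lorenz :: "real \<Rightarrow> ennreal" where
  "gen_lorenz p = (\<integral>\<^sup>+t. indicator {0..} t * ennreal (p - F t) \<partial>lborel)"

lemma borel_measurable_gen_lorenz[measurable]: "gen_lorenz \<in> borel_measurable borel"
proof -
  have "case_prod (\<lambda>p t. indicator {0..} t * ennreal (p - F t)) =
        (\<lambda>x. of_bool (0 \<le> snd x) * ennreal (fst x - F (snd x)))"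
    by (auto simp: fun_eq_iff indicator_def)
  then have "(\<lambda>p. \<integral>\<^sup>+t. indicator {0..} t * ennreal (p - F t) \<partial>lborel) \<in> borel_measurable lborel"
    by (intro lborel.borel_measurable_nn_integral) simp
  then show ?thesis
    unfolding gen_lorenz_def[abs_def] by simp
qed

lemma gen_lorenz_mono: "p \<le> q \<Longrightarrow> gen_lorenz p \<le> gen_lorenz q"
  unfolding gen_lorenz_def by (intro nn_integral_mono mult_left_mono ennreal_leI) auto

lemma nn_integral_quantile:
  assumes "p \<le> 1"
  shows "(\<integral>\<^sup>+s. indicator {0<..<p} s * ennreal (Q s) \<partial>lborel) = gen_lorenz p"
proof -
  let ?I = "\<lambda>s t. of_bool (0 < s \<and> s < p \<and> 0 \<le> t \<and> F t < s) :: ennreal"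
  have "(\<integral>\<^sup>+s. indicator {0<..<p} s * ennreal (Q s) \<partial>lborel) = (\<integral>\<^sup>+s. (\<integral>\<^sup>+t. ?I s t \<partial>lborel) \<partial>lborel)"
  proof (rule nn_integral_cong)
    fix s :: real
    have "(\<integral>\<^sup>+t. ?I s t \<partial>lborel) =
          (\<integral>\<^sup>+t. indicator {0<..<p} s * indicator {t. 0 \<le> t \<and> F t < s} t \<partial>lborel)"
      by (intro nn_integral_cong) (auto simp: indicator_def)
    also have "\<dots> = indicator {0<..<p} s * emeasure lborel {t. 0 \<le> t \<and> F t < s}"
      by (rule nn_integral_cmult_indicator) measurable
    also have "\<dots> = indicator {0<..<p} s * ennreal (Q s)"
      using emeasure_below_quantile[of s] assms by (auto simp: indicator_def)
    finally show "indicator {0<..<p} s * ennreal (Q s) = (\<integral>\<^sup>+t. ?I s t \<partial>lborel)" ..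
  qed
  also have "\<dots> = (\<integral>\<^sup>+t. (\<integral>\<^sup>+s. ?I s t \<partial>lborel) \<partial>lborel)"
    by (rule lborel_pair.Fubini') measurable
  also have "\<dots> = gen_lorenz p"
    unfolding gen_lorenz_def
  proof (rule nn_integral_cong)
    fix t :: real
    have "(\<integral>\<^sup>+s. ?I s t \<partial>lborel) = (\<integral>\<^sup>+s. indicator {0..} t * indicator {F t<..<p} s \<partial>lborel)"
      using cdf_of_nonneg[of t] by (intro nn_integral_cong) (auto simp: indicator_def)
    also have "\<dots> = indicator {0..} t * emeasure lborel {F t<..<p}"
      by (rule nn_integral_cmult_indicator) simp
    also have "\<dots> = indicator {0..} t * ennreal (p - F t)"
      by (cases "F t \<le> p") (simp_all add: ennreal_neg)
    finally show "(\<integral>\<^sup>+s. ?I s t \<partial>lborel) = indicator {0..} t * ennreal (p - F t)" .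
  qed
  finally show ?thesis .
qed

lemma gen_lorenz_one: "gen_lorenz 1 = ennreal (mean_of M X)"
proof -
  have "gen_lorenz 1 = (\<integral>\<^sup>+t. indicator {0..} t * emeasure M {\<omega>\<in>space M. t < X \<omega>} \<partial>lborel)"
    using emeasure_law_greaterThan
    unfolding gen_lorenz_def by (simp add: emeasure_distr vimage_def Int_def conj_commute)
  also have "\<dots> = (\<integral>\<^sup>+\<omega>. ennreal (X \<omega>) \<partial>M)"
    by (rule nn_integral_layer_cake[symmetric]) (auto intro: sigma_finite_measure)
  also have "\<dots> = ennreal (mean_of M X)"
    unfolding mean_of_def by (rule nn_integral_eq_integral[OF X_integrable X_nonneg])
  finally show ?thesis .
qed

lemma gen_lorenz_less_top: "p \<le> 1 \<Longrightarrow> gen_lorenz p < \<top>"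
  using gen_lorenz_mono[of p 1] gen_lorenz_one by (simp add: le_less_trans)

lemma integral_quantile:
  assumes "0 \<le> p" "p \<le> 1"
  shows "(\<integral>t\<in>{0..p}. Q t \<partial>lborel) = enn2real (gen_lorenz p)"
proof -
  have ae: "AE t in lborel. t \<noteq> 0 \<and> t \<noteq> p"
    using AE_lborel_singleton[of 0] AE_lborel_singleton[of p] by eventually_elim simp
  have "(\<integral>\<^sup>+t. ennreal (indicator {0..p} t * Q t) \<partial>lborel) =
        (\<integral>\<^sup>+t. indicator {0<..<p} t * ennreal (Q t) \<partial>lborel)"
  proof (rule nn_integral_cong_AE)
    show "AE t in lborel. ennreal (indicator {0..p} t * Q t) = indicator {0<..<p} t * ennreal (Q t)"
      using ae by eventually_elim (auto simp: indicator_def)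
  qed
  also have "\<dots> = ennreal (enn2real (gen_lorenz p))"
    using nn_integral_quantile gen_lorenz_less_top assms by simp
  finally have nn: "(\<integral>\<^sup>+t. ennreal (indicator {0..p} t * Q t) \<partial>lborel) = ennreal (enn2real (gen_lorenz p))" .
  have "has_bochner_integral lborel (\<lambda>t. indicator {0..p} t * Q t) (enn2real (gen_lorenz p))"
  proof (rule has_bochner_integral_nn_integral)
    show "AE t in lborel. 0 \<le> indicator {0..p} t * Q t"
      using ae by eventually_elim (use assms in \<open>auto simp: indicator_def intro: quantile_nonneg\<close>)
  qed (simp_all add: nn)
  then show ?thesis
    unfolding set_lebesgue_integral_def by (simp add: has_bochner_integral_integral_eq)
qed

lemma lorenz_eq_gen_lorenz:
  "0 \<le> p \<Longrightarrow> p \<le> 1 \<Longrightarrow> lorenz M X p = enn2real (gen_lorenz p) / mean_of M X"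
  unfolding lorenz_def by (simp add: integral_quantile)

lemma integrable_integral_survival:
  "set_integrable lborel {0..} (\<lambda>t. 1 - F t) \<and> (\<integral>t\<in>{0..}. 1 - F t \<partial>lborel) = mean_of M X"
proof -
  have "(\<integral>\<^sup>+t. ennreal (indicator {0..} t * (1 - F t)) \<partial>lborel) = ennreal (mean_of M X)"
    using gen_lorenz_one unfolding gen_lorenz_def by (simp add: indicator_mult_ennreal)
  moreover have "0 \<le> mean_of M X"
    unfolding mean_of_def by (rule integral_nonneg_AE[OF X_nonneg])
  ultimately show ?thesis
    unfolding set_integrable_def set_lebesgue_integral_def
    by (subst (asm) nn_integral_eq_integrable) (auto simp: cdf_of_le_1)
qed

lemma borel_measurable_lorenz[measurable]: "lorenz M X \<in> borel_measurable borel"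
proof -
  have "case_prod (\<lambda>p t. indicator {0..p} t *\<^sub>R Q t) =
        (\<lambda>x. of_bool (0 \<le> snd x \<and> snd x \<le> fst x) * Q (snd x))"
    by (auto simp: fun_eq_iff indicator_def)
  then have "(\<lambda>p. \<integral>t. indicator {0..p} t *\<^sub>R Q t \<partial>lborel) \<in> borel_measurable lborel"
    by (intro lborel.borel_measurable_lebesgue_integral) simp
  then show ?thesis
    unfolding lorenz_def[abs_def] set_lebesgue_integral_def by simp
qed

lemma nn_integral_gen_lorenz_weight:
  fixes w :: "real \<Rightarrow> real"
  assumes [measurable]: "w \<in> borel_measurable borel" and "continuous_on {0..1} w"
    and "\<And>u. u \<in> {0..1} \<Longrightarrow> 0 \<le> w u"
  shows "(\<integral>\<^sup>+u. indicator {0..1} u * gen_lorenz u * ennreal (w u) \<partial>lborel) =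
         (\<integral>\<^sup>+t. indicator {0..} t * ennreal (\<integral>u\<in>{F t..1}. (u - F t) * w u \<partial>lborel) \<partial>lborel)"
proof -
  let ?f = "\<lambda>u t. indicator {0..1} u * ennreal (w u) * (indicator {0..} t * ennreal (u - F t))"
  have "(\<integral>\<^sup>+u. indicator {0..1} u * gen_lorenz u * ennreal (w u) \<partial>lborel) =
        (\<integral>\<^sup>+u. (\<integral>\<^sup>+t. ?f u t \<partial>lborel) \<partial>lborel)"
    unfolding gen_lorenz_def by (subst nn_integral_cmult) (simp_all add: ac_simps)
  also have "\<dots> = (\<integral>\<^sup>+t. (\<integral>\<^sup>+u. ?f u t \<partial>lborel) \<partial>lborel)"
  proof (rule lborel_pair.Fubini'[symmetric])
    have "case_prod ?f = (\<lambda>x. of_bool (0 \<le> fst x \<and> fst x \<le> 1) * ennreal (w (fst x)) *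
                               (of_bool (0 \<le> snd x) * ennreal (fst x - F (snd x))))"
      by (auto simp: fun_eq_iff indicator_def)
    then show "case_prod ?f \<in> borel_measurable (lborel \<Otimes>\<^sub>M lborel)"
      by simp
  qed
  also have "\<dots> = (\<integral>\<^sup>+t. indicator {0..} t * ennreal (\<integral>u\<in>{F t..1}. (u - F t) * w u \<partial>lborel) \<partial>lborel)"
  proof (rule nn_integral_cong)
    fix t :: real
    have "(\<integral>\<^sup>+u. ?f u t \<partial>lborel) =
          indicator {0..} t * (\<integral>\<^sup>+u. indicator {0..1} u * ennreal (u - F t) * ennreal (w u) \<partial>lborel)"
      by (subst nn_integral_cmult[symmetric]) (simp_all add: ac_simps)
    then show "(\<integral>\<^sup>+u. ?f u t \<partial>lborel) = indicator {0..} t * ennreal (\<integral>u\<in>{F t..1}. (u - F t) * w u \<partial>lborel)"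
      using nn_integral_Icc_shift_mult[OF assms(2,3) cdf_of_nonneg cdf_of_le_1] by simp
  qed
  finally show ?thesis .
qed

lemma has_bochner_integral_gen_lorenz_weight:
  fixes w h :: "real \<Rightarrow> real"
  assumes [measurable]: "w \<in> borel_measurable borel" and "continuous_on {0..1} w"
    and w_nonneg: "\<And>u. u \<in> {0..1} \<Longrightarrow> 0 \<le> w u"
    and h: "\<And>a. a \<in> {0..1} \<Longrightarrow> (\<integral>u\<in>{a..1}. (u - a) * w u \<partial>lborel) = h a"
    and h_integrable: "set_integrable lborel {0..} (\<lambda>t. h (F t))"
  shows "has_bochner_integral lborel (\<lambda>u. indicator {0..1} u * enn2real (gen_lorenz u) * w u)
           (\<integral>t\<in>{0..}. h (F t) \<partial>lborel)"
proof (rule has_bochner_integral_nn_integral)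
  have h_nonneg: "0 \<le> h a" if "a \<in> {0..1}" for a
    unfolding h[OF that, symmetric] set_lebesgue_integral_def
    using that w_nonneg by (intro integral_nonneg_AE AE_I2) (auto simp: indicator_def)
  then show "0 \<le> (\<integral>t\<in>{0..}. h (F t) \<partial>lborel)"
    unfolding set_lebesgue_integral_def using cdf_of_nonneg cdf_of_le_1
    by (intro integral_nonneg_AE AE_I2) (auto simp: indicator_def)
  show "AE u in lborel. 0 \<le> indicator {0..1} u * enn2real (gen_lorenz u) * w u"
    using w_nonneg by (intro AE_I2) (auto simp: indicator_def)
  have "(\<integral>\<^sup>+u. ennreal (indicator {0..1} u * enn2real (gen_lorenz u) * w u) \<partial>lborel) =
        (\<integral>\<^sup>+u. indicator {0..1} u * gen_lorenz u * ennreal (w u) \<partial>lborel)"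
    using gen_lorenz_less_top w_nonneg
    by (intro nn_integral_cong) (auto simp: indicator_def ennreal_mult'' less_top)
  also have "\<dots> = (\<integral>\<^sup>+t. ennreal (indicator {0..} t * h (F t)) \<partial>lborel)"
    using nn_integral_gen_lorenz_weight[OF assms(1-3)] h cdf_of_nonneg cdf_of_le_1
    by (simp add: indicator_mult_ennreal)
  also have "\<dots> = ennreal (\<integral>t\<in>{0..}. h (F t) \<partial>lborel)"
    using h_integrable h_nonneg cdf_of_nonneg cdf_of_le_1
    unfolding set_integrable_def set_lebesgue_integral_def real_scaleR_def
    by (intro nn_integral_eq_integral) auto
  finally show "(\<integral>\<^sup>+u. ennreal (indicator {0..1} u * enn2real (gen_lorenz u) * w u) \<partial>lborel) =
      ennreal (\<integral>t\<in>{0..}. h (F t) \<partial>lborel)" .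
qed simp

lemma integral_lorenz_weight:
  fixes w h :: "real \<Rightarrow> real"
  assumes [measurable]: "w \<in> borel_measurable borel" and "continuous_on {0..1} w"
    and "\<And>u. u \<in> {0..1} \<Longrightarrow> 0 \<le> w u"
    and h: "\<And>a. a \<in> {0..1} \<Longrightarrow> (\<integral>u\<in>{a..1}. (u - a) * w u \<partial>lborel) = h a"
    and "set_integrable lborel {0..} (\<lambda>t. h (F t))"
  shows "(\<integral>u. (u - lorenz M X u) * w u \<partial>unif01) = h 0 - (\<integral>t\<in>{0..}. h (F t) \<partial>lborel) / mean_of M X"
proof -
  let ?g = "\<lambda>u. indicator {0..1} u * enn2real (gen_lorenz u) * w u"
  have "(\<integral>u. (u - lorenz M X u) * w u \<partial>unif01) = (\<integral>u. indicator {0..1} u * ((u - lorenz M X u) * w u) \<partial>lborel)"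
    by (rule integral_uniform_01) simp
  also have "\<dots> = (\<integral>u. indicator {0..1} u *\<^sub>R ((u - 0) * w u) - ?g u / mean_of M X \<partial>lborel)"
    by (intro Bochner_Integration.integral_cong)
       (auto simp: indicator_def lorenz_eq_gen_lorenz algebra_simps)
  also have "\<dots> = h 0 - (\<integral>t\<in>{0..}. h (F t) \<partial>lborel) / mean_of M X"
  proof -
    have "continuous_on {0..1} (\<lambda>u. (u - 0) * w u)"
      by (intro continuous_intros assms(2))
    then have "integrable lborel (\<lambda>u. indicator {0..1} u *\<^sub>R ((u - 0) * w u))"
      by (rule borel_integrable_compact[rotated]) simp
    then show ?thesis
      using has_bochner_integral_gen_lorenz_weight[OF assms] h[of 0]
      by (simp add: set_lebesgue_integral_def has_bochner_integral_integral_eq integrable.intros)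
  qed
  finally show ?thesis .
qed

lemma survival_power_integrable:
  assumes "0 < m"
  shows "set_integrable lborel {0..} (\<lambda>t. (1 - F t) ^ m)"
proof (rule set_integrable_bound[OF integrable_integral_survival[THEN conjunct1]])
  show "AE t in lborel. t \<in> {0..} \<longrightarrow> norm ((1 - F t) ^ m) \<le> norm (1 - F t)"
    using assms cdf_of_nonneg cdf_of_le_1
    by (intro AE_I2) (simp add: power_le_one power_decreasing[of 1 m, simplified])
qed (simp add: set_borel_measurable_def)

lemma one_minus_cdf_power_integrable: "set_integrable lborel {0..} (\<lambda>t. 1 - F t ^ m)"
proof (rule set_integrable_bound)
  show "set_integrable lborel {0..} (\<lambda>t. real m * (1 - F t))"
    using integrable_integral_survival by simp
  have "1 - F t ^ m \<le> real m * (1 - F t)" for t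
    using Bernoulli_inequality[of "F t - 1" m] cdf_of_nonneg[of t] by (simp add: algebra_simps)
  then show "AE t in lborel. t \<in> {0..} \<longrightarrow> norm (1 - F t ^ m) \<le> norm (real m * (1 - F t))"
    using cdf_of_nonneg cdf_of_le_1 by (intro AE_I2) (simp add: power_le_one)
qed (simp add: set_borel_measurable_def)

lemma prob_space_iid_copies: "prob_space (iid_copies M X m)"
  unfolding iid_copies_def by (intro prob_space_PiM prob_space_distr) simp

lemma space_iid_copies: "space (iid_copies M X m) = Pi\<^sub>E {..<m} (\<lambda>_. UNIV)"
  by (simp add: iid_copies_def space_PiM)

lemma borel_measurable_iid_component[measurable]:
  "i < m \<Longrightarrow> (\<lambda>x. x i) \<in> borel_measurable (iid_copies M X m)"
  unfolding iid_copies_def by (simp add: measurable_component_singleton cong: measurable_cong_sets)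

lemma emeasure_iid_copies_PiE:
  assumes "\<And>i. i < m \<Longrightarrow> A i \<in> sets borel"
  shows "emeasure (iid_copies M X m) (Pi\<^sub>E {..<m} A) = (\<Prod>i<m. emeasure law (A i))"
proof -
  have "product_sigma_finite (\<lambda>_::nat. law)"
    by (simp add: product_sigma_finite_def prob_space_imp_sigma_finite prob_space_distr)
  from product_sigma_finite.emeasure_PiM[OF this, of "{..<m}" A] show ?thesis
    unfolding iid_copies_def using assms by simp
qed

lemma AE_iid_copies_nonneg: "AE x in iid_copies M X m. \<forall>i\<in>{..<m}. 0 \<le> x i"
proof (rule AE_finite_allI)
  have pps: "product_prob_space (\<lambda>_::nat. law)"
    by (simp add: product_prob_space_def product_prob_space_axioms_def product_sigma_finite_def
                  prob_space_imp_sigma_finite prob_space_distr)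
  have nonneg: "AE x in law. 0 \<le> x"
    by (subst AE_distr_iff) (auto simp: X_nonneg)
  show "AE x in iid_copies M X m. 0 \<le> x i" if "i \<in> {..<m}" for i
    unfolding iid_copies_def by (rule product_prob_space.AE_component[OF pps that nonneg])
qed simp

lemma prob_iid_component_greater:
  assumes "i < m"
  shows "measure (iid_copies M X m) {x\<in>space (iid_copies M X m). t < x i} = 1 - F t"
proof (rule measure_eq_emeasure_eq_ennreal)
  let ?A = "\<lambda>j. if j = i then {t<..} else UNIV"
  have "{x\<in>space (iid_copies M X m). t < x i} = Pi\<^sub>E {..<m} ?A"
  proof (rule set_eqI)
    fix x :: "nat \<Rightarrow> real"
    show "x \<in> {x\<in>space (iid_copies M X m). t < x i} \<longleftrightarrow> x \<in> Pi\<^sub>E {..<m} ?A"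
      unfolding space_iid_copies PiE_iff using assms by auto
  qed
  also have "emeasure (iid_copies M X m) \<dots> = (\<Prod>j<m. emeasure law (?A j))"
    by (rule emeasure_iid_copies_PiE) simp
  also have "\<dots> = (\<Prod>j<m. if j = i then ennreal (1 - F t) else 1)"
    by (rule prod.cong) (simp_all add: emeasure_law_greaterThan emeasure_law_UNIV)
  also have "\<dots> = ennreal (1 - F t)"
    using assms by (subst prod.delta) auto
  finally show "emeasure (iid_copies M X m) {x\<in>space (iid_copies M X m). t < x i} = ennreal (1 - F t)" .
qed (simp add: cdf_of_le_1)

lemma prob_iid_Min_greater:
  assumes "0 < m"
  shows "measure (iid_copies M X m) {x\<in>space (iid_copies M X m). t < Min (x ` {..<m})} = (1 - F t) ^ m"
proof (rule measure_eq_emeasure_eq_ennreal)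
  have "t < Min (x ` {..<m}) \<longleftrightarrow> (\<forall>i<m. t < x i)" for x :: "nat \<Rightarrow> real"
    using assms by (subst Min_gr_iff) auto
  then have "{x\<in>space (iid_copies M X m). t < Min (x ` {..<m})} = Pi\<^sub>E {..<m} (\<lambda>_. {t<..})"
    unfolding set_eq_iff space_iid_copies PiE_iff by auto
  also have "emeasure (iid_copies M X m) \<dots> = ennreal ((1 - F t) ^ m)"
    using cdf_of_le_1[of t]
    by (simp add: emeasure_iid_copies_PiE emeasure_law_greaterThan ennreal_power)
  finally show "emeasure (iid_copies M X m) {x\<in>space (iid_copies M X m). t < Min (x ` {..<m})} =
      ennreal ((1 - F t) ^ m)" .
qed (simp add: cdf_of_le_1)

lemma prob_iid_Max_greater:
  assumes "0 < m"
  shows "measure (iid_copies M X m) {x\<in>space (iid_copies M X m). t < Max (x ` {..<m})} = 1 - F t ^ m"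
proof -
  interpret iid: prob_space "iid_copies M X m"
    by (rule prob_space_iid_copies)
  let ?A = "Pi\<^sub>E {..<m} (\<lambda>_. {..t}) :: (nat \<Rightarrow> real) set"
  have "{x\<in>space (iid_copies M X m). t < Max (x ` {..<m})} = space (iid_copies M X m) - ?A"
  proof (rule set_eqI)
    fix x :: "nat \<Rightarrow> real"
    have "t < Max (x ` {..<m}) \<longleftrightarrow> \<not> (\<forall>i<m. x i \<le> t)"
      using assms by (subst Max_gr_iff) (auto simp: not_le)
    moreover have "x \<in> ?A \<longleftrightarrow> x \<in> space (iid_copies M X m) \<and> (\<forall>i<m. x i \<le> t)"
      unfolding space_iid_copies PiE_iff by auto
    ultimately show "x \<in> {x\<in>space (iid_copies M X m). t < Max (x ` {..<m})} \<longleftrightarrow>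
        x \<in> space (iid_copies M X m) - ?A"
      by blast
  qed
  moreover have "?A \<in> iid.events"
    unfolding iid_copies_def by (rule sets_PiM_I_finite) auto
  moreover have "emeasure (iid_copies M X m) ?A = ennreal (F t ^ m)"
    using cdf_of_nonneg[of t] by (simp add: emeasure_iid_copies_PiE emeasure_law_atMost ennreal_power)
  then have "iid.prob ?A = F t ^ m"
    using cdf_of_nonneg[of t] by (intro measure_eq_emeasure_eq_ennreal) simp_all
  ultimately show ?thesis
    by (simp add: iid.prob_compl)
qed

lemma integrable_integral_iid_component:
  assumes "i < m"
  shows "integrable (iid_copies M X m) (\<lambda>x. x i) \<and> (\<integral>x. x i \<partial>iid_copies M X m) = mean_of M X"
proof -
  have "AE x in iid_copies M X m. 0 \<le> x i"
    using AE_iid_copies_nonneg by eventually_elim (use assms in blast)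
  moreover have "set_integrable lborel {0..}
      (\<lambda>t. measure (iid_copies M X m) {x\<in>space (iid_copies M X m). t < x i})"
    using integrable_integral_survival by (simp add: prob_iid_component_greater[OF assms])
  ultimately show ?thesis
    using integral_layer_cake[OF prob_space.finite_measure[OF prob_space_iid_copies]
        borel_measurable_iid_component[OF assms]] integrable_integral_survival
    by (simp add: prob_iid_component_greater[OF assms])
qed

lemma integrable_integral_iid_Min:
  assumes "0 < m"
  shows "integrable (iid_copies M X m) (\<lambda>x. Min (x ` {..<m})) \<and>
         (\<integral>x. Min (x ` {..<m}) \<partial>iid_copies M X m) = (\<integral>t\<in>{0..}. (1 - F t) ^ m \<partial>lborel)"
proof -
  have "(\<lambda>x. Min (x ` {..<m})) \<in> borel_measurable (iid_copies M X m)"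
    by (rule borel_measurable_Min) auto
  moreover have "AE x in iid_copies M X m. 0 \<le> Min (x ` {..<m})"
    using AE_iid_copies_nonneg by eventually_elim (use assms in \<open>subst Min_ge_iff; auto\<close>)
  moreover have "set_integrable lborel {0..}
      (\<lambda>t. measure (iid_copies M X m) {x\<in>space (iid_copies M X m). t < Min (x ` {..<m})})"
    using survival_power_integrable[OF assms] by (simp add: prob_iid_Min_greater[OF assms])
  ultimately show ?thesis
    using integral_layer_cake[OF prob_space.finite_measure[OF prob_space_iid_copies]]
    by (simp add: prob_iid_Min_greater[OF assms])
qed

lemma integrable_integral_iid_Max:
  assumes "0 < m"
  shows "integrable (iid_copies M X m) (\<lambda>x. Max (x ` {..<m})) \<and>
         (\<integral>x. Max (x ` {..<m}) \<partial>iid_copies M X m) = (\<integral>t\<in>{0..}. 1 - F t ^ m \<partial>lborel)"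
proof -
  have "(\<lambda>x. Max (x ` {..<m})) \<in> borel_measurable (iid_copies M X m)"
    by (rule borel_measurable_Max) auto
  moreover have "AE x in iid_copies M X m. 0 \<le> Max (x ` {..<m})"
    using AE_iid_copies_nonneg
  proof eventually_elim
    case (elim x)
    then have "0 \<le> x 0" using assms by simp
    also have "x 0 \<le> Max (x ` {..<m})" using assms by (intro Max_ge) auto
    finally show ?case .
  qed
  moreover have "set_integrable lborel {0..}
      (\<lambda>t. measure (iid_copies M X m) {x\<in>space (iid_copies M X m). t < Max (x ` {..<m})})"
    using one_minus_cdf_power_integrable by (simp add: prob_iid_Max_greater[OF assms])
  ultimately show ?thesis
    using integral_layer_cake[OF prob_space.finite_measure[OF prob_space_iid_copies]]
    by (simp add: prob_iid_Max_greater[OF assms])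
qed

lemma IG_min_eq:
  assumes "0 < m"
  shows "IG_min M X m = (mean_of M X - (\<integral>t\<in>{0..}. (1 - F t) ^ m \<partial>lborel)) / (real m * mean_of M X)"
  using integrable_integral_iid_component[OF assms] integrable_integral_iid_Min[OF assms]
  unfolding IG_min_def by simp

lemma IG_max_eq:
  assumes "0 < m"
  shows "IG_max M X m = ((\<integral>t\<in>{0..}. 1 - F t ^ m \<partial>lborel) - mean_of M X) / (real m * mean_of M X)"
  using integrable_integral_iid_component[OF assms] integrable_integral_iid_Max[OF assms]
  unfolding IG_max_def by simp

lemma integral_lorenz_mult_complement_power:
  "(\<integral>u. (u - lorenz M X u) * (1 - u) ^ k \<partial>unif01) =
   (1 - (\<integral>t\<in>{0..}. (1 - F t) ^ (k + 2) \<partial>lborel) / mean_of M X) / (real (k + 1) * real (k + 2))"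
proof -
  define c where "c = real (k + 1) * real (k + 2)"
  have "(\<integral>u. (u - lorenz M X u) * (1 - u) ^ k \<partial>unif01) =
        (1 - 0) ^ (k + 2) / c - (\<integral>t\<in>{0..}. (1 - F t) ^ (k + 2) / c \<partial>lborel) / mean_of M X"
  proof (rule integral_lorenz_weight)
    show "continuous_on {0..1} (\<lambda>u::real. (1 - u) ^ k)"
      by (intro continuous_intros)
    show "(\<integral>u\<in>{a..1}. (u - a) * (1 - u) ^ k \<partial>lborel) = (1 - a) ^ (k + 2) / c" if "a \<in> {0..1}" for a
      using that by (simp add: c_def integral_Icc_shift_mult_complement_power)
    show "set_integrable lborel {0..} (\<lambda>t. (1 - F t) ^ (k + 2) / c)"
      using survival_power_integrable[of "k + 2"] by simp
  qed simp_all
  then show ?thesis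
    by (simp add: c_def diff_divide_distrib)
qed

lemma integral_lorenz_mult_power:
  "(\<integral>u. (u - lorenz M X u) * u ^ k \<partial>unif01) =
   (1 - (real (k + 2) * mean_of M X - (\<integral>t\<in>{0..}. 1 - F t ^ (k + 2) \<partial>lborel)) /
        (real (k + 1) * mean_of M X)) / real (k + 2)"
proof -
  define n where "n = real (k + 2)"
  define h where "h a = ((1 - a) - (1 - a ^ (k + 2)) / n) / (n - 1)" for a :: real
  define E where "E = (\<integral>t\<in>{0..}. 1 - F t ^ (k + 2) \<partial>lborel)"
  have n: "n \<noteq> 0" "n - 1 = real (k + 1)" "n - 1 \<noteq> 0"
    by (simp_all add: n_def)
  have survival: "set_integrable lborel {0..} (\<lambda>t. 1 - F t)"
    using integrable_integral_survival by blast
  have max_survival: "set_integrable lborel {0..} (\<lambda>t. (1 - F t ^ (k + 2)) / n)"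
    by (intro set_integrable_divide one_minus_cdf_power_integrable)
  have "(\<integral>u. (u - lorenz M X u) * u ^ k \<partial>unif01) = h 0 - (\<integral>t\<in>{0..}. h (F t) \<partial>lborel) / mean_of M X"
  proof (rule integral_lorenz_weight)
    show "continuous_on {0..1} (\<lambda>u::real. u ^ k)"
      by (intro continuous_intros)
    show "(\<integral>u\<in>{a..1}. (u - a) * u ^ k \<partial>lborel) = h a" if "a \<in> {0..1}" for a
      using that by (simp add: h_def n_def integral_Icc_shift_mult_power)
    show "set_integrable lborel {0..} (\<lambda>t. h (F t))"
      unfolding h_def using set_integral_diff(1)[OF survival max_survival] by simp
  qed simp_all
  also have "(\<integral>t\<in>{0..}. h (F t) \<partial>lborel) = (mean_of M X - E / n) / (n - 1)"
    unfolding h_def E_def using set_integral_diff(2)[OF survival max_survival] integrable_integral_survival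
    by simp
  also have "h 0 = 1 / n"
    using n(1,3) by (simp add: h_def field_simps)
  also have "1 / n - (mean_of M X - E / n) / (n - 1) / mean_of M X =
             (1 - (n * mean_of M X - E) / ((n - 1) * mean_of M X)) / n"
    using n(1,3) by (cases "mean_of M X = 0") (simp_all add: field_simps)
  finally show ?thesis
    unfolding n(2) unfolding n_def E_def .
qed

lemma G_index_eq:
  assumes "2 \<le> m"
  shows "G_index M X m = 1 - (\<integral>t\<in>{0..}. (1 - F t) ^ m \<partial>lborel) / mean_of M X"
proof -
  obtain k where m: "m = k + 2"
    using assms by (metis le_add_diff_inverse2)
  have "real (k + 1) * real (k + 2) \<noteq> 0"
    by simp
  then show ?thesis
    unfolding G_index_def m by (simp add: integral_lorenz_mult_complement_power)
qed

lemma D_index_eq: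
  assumes "2 \<le> m"
  shows "D_index M X (m - 1) =
         1 - (real m * mean_of M X - (\<integral>t\<in>{0..}. 1 - F t ^ m \<partial>lborel)) / ((real m - 1) * mean_of M X)"
proof -
  obtain k where m: "m = k + 2"
    using assms by (metis le_add_diff_inverse2)
  have "real (k + 2) \<noteq> 0" "real (k + 2) - 1 = real (k + 1)"
    by simp_all
  then show ?thesis
    unfolding D_index_def m by (simp add: integral_lorenz_mult_power)
qed

end

theorem proposition2p6:
  fixes M :: "'a measure" and X :: "'a \<Rightarrow> real" and m :: nat
  assumes "prob_space M"
    and "X \<in> borel_measurable M"
    and "AE \<omega> in M. 0 \<le> X \<omega>"
    and "integrable M X"
    and "mean_of M X > 0"
    and "2 \<le> m"
  shows "IG_min M X m = (1 / real m) * G_index M X m \<and>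
         IG_max M X m = (1 - 1 / real m) * D_index M X (m - 1)"
proof -
  interpret nonneg_integrable_rv M X
    using assms(1-4) by (simp add: nonneg_integrable_rv_def nonneg_integrable_rv_axioms_def)
  have "0 < m" "real m \<noteq> 0" "real m - 1 \<noteq> 0" "mean_of M X \<noteq> 0"
    using assms(5,6) by auto
  then show ?thesis
    unfolding IG_min_eq[OF \<open>0 < m\<close>] G_index_eq[OF assms(6)]
      IG_max_eq[OF \<open>0 < m\<close>] D_index_eq[OF assms(6)]
    by (simp add: field_simps)
qed

end
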